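(* Let $f\colon\{0,1\}^n\to\{0,1\}$ be a total function with $f^{-1}(0)\neq\emptyset$. Then there exist a partial function $g\colon\{0,1\}^{2n}\to\{0,1,*\}$ and an input $z\in g^{-1}( * )$ such that \[ \min\{\mathrm{C}_{\bar 0}(g,z),\,\mathrm{C}_{\bar 1}(g,z)\}\;\ge\;\mathrm{C}_0(f)\qquad\text{and}\qquad\mathrm{C}(g)\;\le\;2\,\mathrm{UC}_1(f). \]
   Context: For a partial function $f\colon\{0,1\}^n\to\{0,1,*\}$: a partial input $\rho\in\{0,1,*\}^n$ is consistent with $x\in\{0,1\}^n$ if $\rho_i=x_i$ whenever $\rho_i\neq*$; its size $|\rho|$ is the number of non-$*$ entries. For $\Sigma\subseteq\{0,1,*\}$, $\rho$ is a $\Sigma$-certificate for $x$ if $\rho$ is consistent with $x$ and $f(x')\in\Sigma$ for all $x'$ consistent with $\rho$. $\mathrm{C}_\Sigma(f,x)$ is the least size of a $\Sigma$-certificate for $x$, and $\mathrm{C}_\Sigma(f)=\max_{x\in f^{-1}(\Sigma)}\mathrm{C}_\Sigma(f,x)$. We write $0,1,\bar0,\bar1$ for $\Sigma=\{0\},\{1\},\{1,*\},\{0,*\}$, and $\mathrm{C}(f)=\max\{\mathrm{C}_0(f),\mathrm{C}_1(f)\}$. For total $f$, $\mathrm{C}_0(f)$ is the least $k$ such that $f$ is a width-$k$ CNF, and $\mathrm{UC}_1(f)$ is the least $k$ such that $f$ can be written as an unambiguous width-$k$ DNF (every input satisfies at most one term; width = maximum number of literals in a term). *)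

theory Defs
  imports Main
begin

datatype out = O0 | O1 | Star

text \<open>Inputs in {0,1}^n are bool lists of length n; partial inputs in {0,1,*}^n
  are bool option lists of length n (None = *). A (partial) function on {0,1}^n is
  a map on bool lists; only its values on lists of length n matter.\<close>

definition consistent :: "bool option list \<Rightarrow> bool list \<Rightarrow> bool" where
  "consistent \<rho> x \<longleftrightarrow> length \<rho> = length x \<and>
     (\<forall>i < length \<rho>. \<rho> ! i \<noteq> None \<longrightarrow> \<rho> ! i = Some (x ! i))"

definition psize :: "bool option list \<Rightarrow> nat" where
  "psize \<rho> = card {i. i < length \<rho> \<and> \<rho> ! i \<noteq> None}"

definition is_cert :: "nat \<Rightarrow> (bool list \<Rightarrow> out) \<Rightarrow> out set \<Rightarrow> bool option list \<Rightarrow> bool list \<Rightarrow> bool" where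
  "is_cert n f \<Sigma> \<rho> x \<longleftrightarrow> length \<rho> = n \<and> consistent \<rho> x \<and>
     (\<forall>x'. length x' = n \<longrightarrow> consistent \<rho> x' \<longrightarrow> f x' \<in> \<Sigma>)"

definition C_at :: "nat \<Rightarrow> (bool list \<Rightarrow> out) \<Rightarrow> out set \<Rightarrow> bool list \<Rightarrow> nat" where
  "C_at n f \<Sigma> x = (LEAST k. \<exists>\<rho>. is_cert n f \<Sigma> \<rho> x \<and> psize \<rho> = k)"

definition C_sig :: "nat \<Rightarrow> (bool list \<Rightarrow> out) \<Rightarrow> out set \<Rightarrow> nat" where
  "C_sig n f \<Sigma> = (let S = {C_at n f \<Sigma> x | x. length x = n \<and> f x \<in> \<Sigma>}
                     in if S = {} then 0 else Max S)"

definition C_full :: "nat \<Rightarrow> (bool list \<Rightarrow> out) \<Rightarrow> nat" where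
  "C_full n f = max (C_sig n f {O0}) (C_sig n f {O1})"

definition to_out :: "(bool list \<Rightarrow> bool) \<Rightarrow> bool list \<Rightarrow> out" where
  "to_out f x = (if f x then O1 else O0)"

definition C0_total :: "nat \<Rightarrow> (bool list \<Rightarrow> bool) \<Rightarrow> nat" where
  "C0_total n f = C_sig n (to_out f) {O0}"

text \<open>Unambiguous DNFs over n variables: a set of terms, each term a partial
  input (its non-* entries are the literals). f is computed by T if f x holds iff
  x satisfies some term; unambiguous if every input satisfies at most one term.\<close>
definition unamb_dnf_width :: "nat \<Rightarrow> (bool list \<Rightarrow> bool) \<Rightarrow> nat \<Rightarrow> bool" where
  "unamb_dnf_width n f k \<longleftrightarrow> (\<exists>T :: bool option list set.
      (\<forall>t\<in>T. length t = n \<and> psize t \<le> k) \<and>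
      (\<forall>x. length x = n \<longrightarrow> (f x \<longleftrightarrow> (\<exists>t\<in>T. consistent t x))) \<and>
      (\<forall>x. length x = n \<longrightarrow> card {t \<in> T. consistent t x} \<le> 1))"

definition UC1 :: "nat \<Rightarrow> (bool list \<Rightarrow> bool) \<Rightarrow> nat" where
  "UC1 n f = (LEAST k. unamb_dnf_width n f k)"

end

theory Submission
  imports Defs
begin

text \<open>Fix an unambiguous DNF T of width k = UC_1(f) and let g(x, y) be 1 if x and y satisfy a
  common term of T, 0 if x satisfies a term but y does not satisfy it, and * if f(x) = 0.
  A 1-input of g is certified by its common term fixed on both halves, a 0-input by the term
  of x together with one literal of y violating it; unambiguity ensures that no other term
  accepts x, so C(g) \<le> 2k. For a 0-input x0 of f and z = x0 x0, a certificate of z for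
  {0, *} or {1, *} folds onto the n coordinates to a 0-certificate of x0 of no larger size:
  an x' with f(x') = 1 consistent with it would give g(x' x0) = 0 and g(x' x') = 1.\<close>

lemma psize_conv_length_filter: "psize \<rho> = length (filter (\<lambda>a. a \<noteq> None) \<rho>)"
  by (simp add: psize_def length_filter_conv_card)

lemma psize_append [simp]: "psize (\<rho> @ \<sigma>) = psize \<rho> + psize \<sigma>"
  by (simp add: psize_conv_length_filter)

lemma consistent_iff_list_all2:
  "consistent \<rho> x \<longleftrightarrow> list_all2 (\<lambda>a b. a = None \<or> a = Some b) \<rho> x"
  by (auto simp: consistent_def list_all2_conv_all_nth)

lemma consistent_append:
  "length \<rho> = length x \<Longrightarrow> consistent (\<rho> @ \<sigma>) (x @ y) \<longleftrightarrow> consistent \<rho> x \<and> consistent \<sigma> y"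
  by (simp add: consistent_iff_list_all2 list_all2_append)

lemma consistent_map_Some_iff: "consistent (map Some x) y \<longleftrightarrow> y = x"
  by (auto simp: consistent_def intro: nth_equalityI)

definition literal :: "nat \<Rightarrow> nat \<Rightarrow> bool \<Rightarrow> bool option list" where
  "literal n i b = (replicate n None)[i := Some b]"

lemma psize_literal: "i < n \<Longrightarrow> psize (literal n i b) = 1"
proof -
  assume "i < n"
  then have "{j. j < length (literal n i b) \<and> literal n i b ! j \<noteq> None} = {i}"
    by (auto simp: literal_def nth_list_update)
  then show ?thesis by (simp add: psize_def)
qed

lemma consistent_literal_iff:
  "i < n \<Longrightarrow> consistent (literal n i b) y \<longleftrightarrow> length y = n \<and> y ! i = b"
  by (auto simp: literal_def consistent_def nth_list_update)

lemma psize_pos: "i < length \<rho> \<Longrightarrow> \<rho> ! i \<noteq> None \<Longrightarrow> 0 < psize \<rho>"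
  unfolding psize_def by (subst card_gt_0_iff) auto

lemma split_at_length:
  assumes "length w = n + m"
  obtains x y where "w = x @ y" "length x = n" "length y = m"
  using assms by (metis append_take_drop_id add_diff_cancel_left' length_drop length_take
      min.absorb2 le_add1)

lemma C_at_le: "is_cert n g S \<rho> x \<Longrightarrow> C_at n g S x \<le> psize \<rho>"
  unfolding C_at_def by (rule Least_le) blast

lemma C_at_geI:
  assumes "is_cert n g S \<rho>\<^sub>0 x" and "\<And>\<rho>. is_cert n g S \<rho> x \<Longrightarrow> m \<le> psize \<rho>"
  shows "m \<le> C_at n g S x"
proof -
  have "\<exists>\<rho>. is_cert n g S \<rho> x \<and> psize \<rho> = C_at n g S x"
    unfolding C_at_def by (rule LeastI_ex) (use assms(1) in blast)
  then show ?thesis using assms(2) by force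
qed

lemma is_cert_map_Some: "length x = n \<Longrightarrow> g x \<in> S \<Longrightarrow> is_cert n g S (map Some x) x"
  by (simp add: is_cert_def consistent_map_Some_iff)

lemma is_cert_append_iff:
  assumes "length \<rho> = n" "length \<sigma> = m" "length x = n"
  shows "is_cert (n + m) g S (\<rho> @ \<sigma>) (x @ y) \<longleftrightarrow> consistent \<rho> x \<and> consistent \<sigma> y \<and>
    (\<forall>x' y'. length x' = n \<longrightarrow> length y' = m \<longrightarrow> consistent \<rho> x' \<longrightarrow> consistent \<sigma> y' \<longrightarrow>
       g (x' @ y') \<in> S)"
proof -
  have split: "(\<forall>w. length w = n + m \<longrightarrow> P w) \<longleftrightarrow>
      (\<forall>x' y'. length x' = n \<longrightarrow> length y' = m \<longrightarrow> P (x' @ y'))" for P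
    by (metis length_append split_at_length)
  show ?thesis
    using assms unfolding is_cert_def split by (auto simp: consistent_append)
qed

lemma C_sig_le:
  assumes "\<And>x. length x = n \<Longrightarrow> g x \<in> S \<Longrightarrow> C_at n g S x \<le> m"
  shows "C_sig n g S \<le> m"
proof -
  let ?C = "{C_at n g S x | x. length x = n \<and> g x \<in> S}"
  have "\<forall>c\<in>?C. c \<le> m" using assms by auto
  moreover from this have "finite ?C" using finite_nat_set_iff_bounded_le by blast
  ultimately show ?thesis by (simp add: C_sig_def Let_def)
qed

lemma C_sig_attained:
  assumes "\<exists>x. length x = n \<and> g x \<in> S"
  obtains x where "length x = n" "g x \<in> S" "C_sig n g S = C_at n g S x"
proof -
  let ?C = "{C_at n g S x | x. length x = n \<and> g x \<in> S}"
  have "?C \<subseteq> C_at n g S ` {x. length x = n}" by auto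
  then have "finite ?C"
    by (rule finite_subset) (use finite_lists_length_eq[of "UNIV :: bool set"] in simp)
  moreover have "?C \<noteq> {}" using assms by blast
  ultimately have "Max ?C \<in> ?C" by (rule Max_in)
  moreover have "C_sig n g S = Max ?C"
    unfolding C_sig_def Let_def using \<open>?C \<noteq> {}\<close> by (simp only: if_False)
  ultimately show ?thesis using that by auto
qed

definition merge_partial :: "bool option list \<Rightarrow> bool option list \<Rightarrow> bool option list" where
  "merge_partial \<rho> \<sigma> = map2 (\<lambda>a b. if a = None then b else a) \<rho> \<sigma>"

lemma length_merge_partial [simp]: "length (merge_partial \<rho> \<sigma>) = min (length \<rho>) (length \<sigma>)"
  by (simp add: merge_partial_def)

lemma psize_merge_partial_le: "psize (merge_partial \<rho> \<sigma>) \<le> psize \<rho> + psize \<sigma>"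
proof -
  let ?D = "\<lambda>\<tau>. {i. i < length \<tau> \<and> \<tau> ! i \<noteq> None}"
  have "?D (merge_partial \<rho> \<sigma>) \<subseteq> ?D \<rho> \<union> ?D \<sigma>"
    by (auto simp: merge_partial_def)
  then have "card (?D (merge_partial \<rho> \<sigma>)) \<le> card (?D \<rho> \<union> ?D \<sigma>)"
    by (intro card_mono) auto
  also have "\<dots> \<le> card (?D \<rho>) + card (?D \<sigma>)" by (rule card_Un_le)
  finally show ?thesis by (simp add: psize_def)
qed

lemma consistent_merge_partial_iff:
  assumes "consistent \<rho> x" "consistent \<sigma> x"
  shows "consistent (merge_partial \<rho> \<sigma>) y \<longleftrightarrow> consistent \<rho> y \<and> consistent \<sigma> y"
  using assms by (auto simp: consistent_def merge_partial_def)

lemma unamb_dnf_width_length: "unamb_dnf_width n f n"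
proof -
  let ?T = "{map Some x | x. length x = n \<and> f x}"
  have "psize (map Some x) = length x" for x :: "bool list"
    by (simp add: psize_conv_length_filter)
  moreover have "{t \<in> ?T. consistent t x} \<subseteq> {map Some x}" for x
    by (auto simp: consistent_map_Some_iff)
  then have "card {t \<in> ?T. consistent t x} \<le> 1" for x
    using card_mono[of "{map Some x}"] by fastforce
  ultimately show ?thesis
    unfolding unamb_dnf_width_def by (intro exI[of _ ?T]) (auto simp: consistent_map_Some_iff)
qed

lemma unamb_dnf_width_UC1: "unamb_dnf_width n f (UC1 n f)"
  unfolding UC1_def by (rule LeastI) (rule unamb_dnf_width_length)

locale dnf =
  fixes n :: nat and f :: "bool list \<Rightarrow> bool" and T :: "bool option list set"
  assumes length_term: "t \<in> T \<Longrightarrow> length t = n"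
    and dnf_iff: "length x = n \<Longrightarrow> f x \<longleftrightarrow> (\<exists>t\<in>T. consistent t x)"
begin

definition twin :: "bool list \<Rightarrow> out" where
  "twin w = (if \<exists>t\<in>T. consistent t (take n w) \<and> consistent t (drop n w) then O1
     else if \<exists>t\<in>T. consistent t (take n w) then O0 else Star)"

lemma twin_append:
  "length x = n \<Longrightarrow> twin (x @ y) =
     (if \<exists>t\<in>T. consistent t x \<and> consistent t y then O1 else if f x then O0 else Star)"
  by (simp add: twin_def dnf_iff)

lemma C_at_twin_ge:
  assumes x0: "length x0 = n" "\<not> f x0" and S: "Star \<in> S" "\<not> {O0, O1} \<subseteq> S"
  shows "C_at n (to_out f) {O0} x0 \<le> C_at (2 * n) twin S (x0 @ x0)"
proof (rule C_at_geI)
  show "is_cert (2 * n) twin S (map Some (x0 @ x0)) (x0 @ x0)"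
    using x0 S dnf_iff by (intro is_cert_map_Some) (auto simp: twin_append)
  fix \<rho> assume "is_cert (2 * n) twin S \<rho> (x0 @ x0)"
  moreover obtain \<rho>\<^sub>1 \<rho>\<^sub>2 where \<rho>: "\<rho> = \<rho>\<^sub>1 @ \<rho>\<^sub>2" "length \<rho>\<^sub>1 = n" "length \<rho>\<^sub>2 = n"
    using \<open>is_cert (2 * n) twin S \<rho> (x0 @ x0)\<close>
    by (metis is_cert_def mult_2 split_at_length)
  ultimately have \<rho>\<^sub>i: "consistent \<rho>\<^sub>1 x0" "consistent \<rho>\<^sub>2 x0"
    and cert: "\<And>x' y'. length x' = n \<Longrightarrow> length y' = n \<Longrightarrow> consistent \<rho>\<^sub>1 x' \<Longrightarrow>
      consistent \<rho>\<^sub>2 y' \<Longrightarrow> twin (x' @ y') \<in> S"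
    using is_cert_append_iff[of \<rho>\<^sub>1 n \<rho>\<^sub>2 n x0 twin S x0] x0 by (auto simp: mult_2)
  define \<sigma> where "\<sigma> = merge_partial \<rho>\<^sub>1 \<rho>\<^sub>2"
  have \<sigma>: "consistent \<sigma> y \<longleftrightarrow> consistent \<rho>\<^sub>1 y \<and> consistent \<rho>\<^sub>2 y" for y
    unfolding \<sigma>_def using \<rho>\<^sub>i by (rule consistent_merge_partial_iff)
  have "\<not> f x'" if "length x' = n" "consistent \<sigma> x'" for x'
  proof
    assume "f x'"
    then have "twin (x' @ x0) = O0" "twin (x' @ x') = O1"
      using that x0 dnf_iff by (auto simp: twin_append)
    moreover have "twin (x' @ x0) \<in> S" "twin (x' @ x') \<in> S"
      using cert that x0 \<rho>\<^sub>i \<sigma> by auto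
    ultimately show False using S by auto
  qed
  then have "is_cert n (to_out f) {O0} \<sigma> x0"
    using \<rho> \<rho>\<^sub>i \<sigma> by (auto simp: is_cert_def \<sigma>_def to_out_def)
  then have "C_at n (to_out f) {O0} x0 \<le> psize \<sigma>" by (rule C_at_le)
  also have "\<dots> \<le> psize \<rho>" unfolding \<sigma>_def \<rho> by (simp add: psize_merge_partial_le)
  finally show "C_at n (to_out f) {O0} x0 \<le> psize \<rho>" .
qed

lemma is_cert_twin_O1:
  assumes "t \<in> T" "consistent t x" "consistent t y"
  shows "is_cert (2 * n) twin {O1} (t @ t) (x @ y)"
proof -
  have "length t = n" "length x = n" "length y = n"
    using assms length_term by (auto simp: consistent_def)
  then show ?thesis using assms is_cert_append_iff[of t n t n x twin "{O1}" y]
    by (auto simp: mult_2 twin_append)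
qed

end

locale unambiguous_dnf = dnf +
  fixes k :: nat
  assumes width: "t \<in> T \<Longrightarrow> psize t \<le> k"
    and unambiguous:
      "\<lbrakk>t \<in> T; t' \<in> T; length x = n; consistent t x; consistent t' x\<rbrakk> \<Longrightarrow> t = t'"
begin

lemma is_cert_twin_O0:
  assumes t: "t \<in> T" "consistent t x" and i: "i < n" "t ! i = Some (\<not> y ! i)"
    and "length y = n"
  shows "is_cert (2 * n) twin {O0} (t @ literal n i (y ! i)) (x @ y)"
proof -
  have len: "length t = n" "length x = n" "length (literal n i (y ! i)) = n"
    using t length_term by (auto simp: consistent_def literal_def)
  have "twin (x' @ y') = O0"
    if "length x' = n" "consistent t x'" "length y' = n" "y' ! i = y ! i" for x' y'
  proof -
    have "\<not> consistent t y'" using i that by (auto simp: consistent_def)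
    then have "\<not> (\<exists>t'\<in>T. consistent t' x' \<and> consistent t' y')"
      using unambiguous[OF t(1) _ that(1,2)] by blast
    moreover have "f x'" using t that dnf_iff by blast
    ultimately show ?thesis using that by (simp add: twin_append)
  qed
  then show ?thesis
    using assms len is_cert_append_iff[of t n "literal n i (y ! i)" n x twin "{O0}" y]
    by (auto simp: mult_2 consistent_literal_iff)
qed

lemma C_at_twin_le:
  assumes w: "length w = 2 * n" "twin w \<noteq> Star"
  shows "C_at (2 * n) twin {twin w} w \<le> 2 * k"
proof -
  obtain x y where xy: "w = x @ y" "length x = n" "length y = n"
    using w(1) by (metis mult_2 split_at_length)
  obtain t where t: "t \<in> T" "consistent t x"
    using w xy dnf_iff by (auto simp: twin_append split: if_splits)
  show ?thesis
  proof (cases "consistent t y")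
    case True
    then have "twin w = O1" using t xy by (auto simp: twin_append)
    then have "C_at (2 * n) twin {twin w} w \<le> psize (t @ t)"
      using C_at_le[OF is_cert_twin_O1[OF t True]] xy(1) by simp
    then show ?thesis using width[OF t(1)] by simp
  next
    case False
    then obtain i where i: "i < n" "t ! i = Some (\<not> y ! i)"
      using t xy length_term by (auto simp: consistent_def)
    have "\<not> (\<exists>t'\<in>T. consistent t' x \<and> consistent t' y)"
      using unambiguous[OF t(1) _ xy(2) t(2)] False by blast
    then have "twin w = O0"
      using t xy dnf_iff by (auto simp: twin_append)
    then have "C_at (2 * n) twin {twin w} w \<le> psize (t @ literal n i (y ! i))"
      using C_at_le[OF is_cert_twin_O0[OF t i xy(3)]] xy(1) by simp
    moreover have "0 < psize t" using i t length_term by (intro psize_pos[of i]) auto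
    ultimately show ?thesis using width[OF t(1)] psize_literal[OF i(1)] by simp
  qed
qed

lemma C_full_twin_le: "C_full (2 * n) twin \<le> 2 * k"
proof -
  have "C_sig (2 * n) twin {v} \<le> 2 * k" if "v \<noteq> Star" for v
    by (rule C_sig_le) (metis C_at_twin_le singletonD that)
  then show ?thesis by (simp add: C_full_def)
qed

end

lemma unamb_dnf_width_imp_unambiguous_dnf:
  assumes "unamb_dnf_width n f k"
  shows "\<exists>T. unambiguous_dnf n f T k"
proof -
  obtain T where T: "\<forall>t\<in>T. length t = n \<and> psize t \<le> k"
    "\<forall>x. length x = n \<longrightarrow> (f x \<longleftrightarrow> (\<exists>t\<in>T. consistent t x))"
    "\<forall>x. length x = n \<longrightarrow> card {t \<in> T. consistent t x} \<le> 1"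
    using assms unfolding unamb_dnf_width_def by blast
  have "finite {t \<in> T. consistent t x}" for x
    using T(1) finite_lists_length_eq[of "UNIV :: bool option set" n]
    by (auto intro: finite_subset[of _ "{t. length t = n}"])
  then have "t = t'"
    if "t \<in> T" "t' \<in> T" "length x = n" "consistent t x" "consistent t' x" for t t' x
    using that T(3) card_le_Suc0_iff_eq by (metis (no_types, lifting) One_nat_def mem_Collect_eq)
  with T show ?thesis by (intro exI[of _ T], unfold_locales) auto
qed

theorem theorem2p2:
  fixes n :: nat and f :: "bool list \<Rightarrow> bool"
  assumes "\<exists>x. length x = n \<and> \<not> f x"
  shows "\<exists>(g :: bool list \<Rightarrow> out) z. length z = 2 * n \<and> g z = Star \<and>
           min (C_at (2 * n) g {O1, Star} z) (C_at (2 * n) g {O0, Star} z) \<ge> C0_total n f \<and>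
           C_full (2 * n) g \<le> 2 * UC1 n f"
proof -
  obtain T where "unambiguous_dnf n f T (UC1 n f)"
    using unamb_dnf_width_imp_unambiguous_dnf[OF unamb_dnf_width_UC1] by blast
  then interpret unambiguous_dnf n f T "UC1 n f" .
  have "\<exists>x. length x = n \<and> to_out f x \<in> {O0}" using assms by (auto simp: to_out_def)
  then obtain x0 where "length x0 = n" "to_out f x0 \<in> {O0}"
    "C0_total n f = C_at n (to_out f) {O0} x0"
    unfolding C0_total_def by (rule C_sig_attained)
  then have x0: "length x0 = n" "\<not> f x0" "C0_total n f = C_at n (to_out f) {O0} x0"
    by (auto simp: to_out_def split: if_splits)
  have "twin (x0 @ x0) = Star" using x0 dnf_iff by (simp add: twin_append)
  moreover have "C0_total n f \<le> C_at (2 * n) twin S (x0 @ x0)"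
    if "S = {O1, Star} \<or> S = {O0, Star}" for S
    using C_at_twin_ge[of x0 S] x0 that by auto
  ultimately show ?thesis using x0(1) C_full_twin_le
    by (intro exI[of _ twin] exI[of _ "x0 @ x0"]) simp
qed

end
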